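(* Let $k\geq 3$ be an integer and let $m$ be an odd positive integer such that $m\notin\mathcal F(k)$. Then $k-1\geq 2^{\delta(m)}$, where $\delta(m)=\lceil\log_2(m/3)\rceil$.
   Context: The Thue–Morse word is $\mathbf t=\mathbf t_1\mathbf t_2\cdots$ where $\mathbf t_i\in\{0,1\}$ has the parity of the number of $1$'s in the binary expansion of $i-1$. For positive integers $\alpha\le\beta$, write $\langle\alpha,\beta\rangle=\mathbf t_\alpha\mathbf t_{\alpha+1}\cdots\mathbf t_\beta$. A $k$-anti-power is a word $w_1w_2\cdots w_k$ where $w_1,\dots,w_k$ are pairwise distinct words all of the same length. $\mathcal F(k)$ is the set of odd positive integers $m$ such that the prefix $\langle 1,km\rangle$ of $\mathbf t$ is a $k$-anti-power, i.e. such that the blocks $\langle nm+1,(n+1)m\rangle$, $0\le n\le k-1$, are pairwise distinct. *)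

theory Defs
  imports Complex_Main
begin

fun bin_ones :: "nat \<Rightarrow> nat" where
  "bin_ones n = (if n = 0 then 0 else n mod 2 + bin_ones (n div 2))"

(* Thue-Morse word, 1-indexed: t_i = parity of the number of 1's in binary expansion of i-1 *)
definition thue_morse :: "nat \<Rightarrow> nat" where
  "thue_morse i = bin_ones (i - 1) mod 2"

definition tm_factor :: "nat \<Rightarrow> nat \<Rightarrow> nat list" where
  "tm_factor \<alpha> \<beta> = map thue_morse [\<alpha>..<\<beta> + 1]"

definition F_set :: "nat \<Rightarrow> nat set" where
  "F_set k = {m. odd m \<and> 0 < m \<and>
     (\<forall>n1 < k. \<forall>n2 < k. n1 \<noteq> n2 \<longrightarrow>
        tm_factor (n1 * m + 1) ((n1 + 1) * m) \<noteq> tm_factor (n2 * m + 1) ((n2 + 1) * m))}"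

definition tm_delta :: "nat \<Rightarrow> int" where
  "tm_delta m = \<lceil>log 2 (real m / 3)\<rceil>"

end

theory Submission
  imports Defs "HOL-Computational_Algebra.Primes"
begin

text \<open>
  Suppose two of the first \<open>k\<close> blocks of length \<open>m\<close> coincide, say the blocks \<open>a < b\<close>,
  and write \<open>b - a = 2^e c\<close> with \<open>c\<close> odd. Then the Thue--Morse word agrees with its own
  shift by \<open>2^e c m\<close> on a window of length \<open>m\<close>. Halving all positions via
  \<open>t(2i) = t(i)\<close>, \<open>t(2i+1) = 1 - t(i)\<close> turns such an agreement on a window of length
  \<open>3\<cdot>2^e + 1\<close> into one on a window of length \<open>4\<close> with an odd shift, which is impossible
  because the word contains no factor \<open>aaa\<close>. Hence \<open>m \<le> 3\<cdot>2^e\<close>, while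
  \<open>2^e \<le> b - a \<le> k - 1\<close>.
\<close>

declare bin_ones.simps [simp del]

text \<open>The Thue--Morse word indexed from \<open>0\<close> and over \<open>bool\<close>: \<open>thue_morse (Suc i) = of_bool (tm i)\<close>.\<close>

definition tm :: "nat \<Rightarrow> bool" where
  "tm i \<longleftrightarrow> odd (bin_ones i)"

lemma bin_ones_0 [simp]: "bin_ones 0 = 0"
  by (subst bin_ones.simps) simp

lemma tm_double [simp]: "tm (2 * i) = tm i"
  unfolding tm_def by (subst bin_ones.simps) simp

lemma tm_Suc_double [simp]: "tm (Suc (2 * i)) = (\<not> tm i)"
  unfolding tm_def by (subst bin_ones.simps) simp

lemma tm_Suc_even: "even i \<Longrightarrow> tm (Suc i) = (\<not> tm i)"
  by (elim evenE) simp

lemma tm_halve: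
  assumes "tm (p + 2 * i) = tm (p + 2 * j)"
  shows "tm (p div 2 + i) = tm (p div 2 + j)"
proof (cases "even p")
  case True
  then obtain s where s: "p = 2 * s" by blast
  then have "tm (p + 2 * n) = tm (s + n)" for n
    by (metis distrib_left tm_double)
  with assms s show ?thesis by simp
next
  case False
  then obtain s where s: "p = Suc (2 * s)" by (auto elim: oddE)
  then have "tm (p + 2 * n) = (\<not> tm (s + n))" for n
    by (metis add_Suc distrib_left tm_Suc_double)
  with assms s show ?thesis by simp
qed

lemma tm_not_three_equal: "\<not> (tm r = tm (r + 1) \<and> tm (r + 1) = tm (r + 2))"
proof (cases "even r")
  case True
  then show ?thesis by (simp add: tm_Suc_even)
next
  case False
  then have "even (r + 1)" by simp
  then show ?thesis using tm_Suc_even[of "r + 1"] by simp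
qed

lemma tm_not_alternating_from_odd:
  assumes "odd q"
  shows "\<not> (tm (q + 1) \<noteq> tm q \<and> tm (q + 2) \<noteq> tm (q + 1) \<and> tm (q + 3) \<noteq> tm (q + 2))"
proof -
  obtain r where r: "q = Suc (2 * r)" using assms by (auto elim: oddE)
  then have "q + 1 = 2 * (r + 1)" "q + 2 = Suc (2 * (r + 1))" "q + 3 = 2 * (r + 2)"
    by simp_all
  then have "tm q = (\<not> tm r)" "tm (q + 1) = tm (r + 1)" "tm (q + 2) = (\<not> tm (r + 1))"
      "tm (q + 3) = tm (r + 2)"
    by (simp_all only: r tm_double tm_Suc_double)
  then show ?thesis using tm_not_three_equal[of r] by auto
qed

lemma tm_odd_shift_disagrees_4:
  assumes "odd d"
  shows "\<exists>j < 4. tm (p + j) \<noteq> tm (p + d + j)"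
proof (rule ccontr)
  assume "\<not> ?thesis"
  then have agree: "tm (p + j) = tm (p + d + j)" if "j < 4" for j
    using that by blast
  \<comment> \<open>of the two positions \<open>p + j\<close>, \<open>p + d + j\<close> one is even, so both letter pairs starting there differ\<close>
  have alt: "tm (p + (j + 1)) \<noteq> tm (p + j) \<and> tm (p + d + (j + 1)) \<noteq> tm (p + d + j)"
    if "j < 3" for j
  proof -
    have "even (p + j) \<or> even (p + d + j)" using assms by auto
    then show ?thesis
      using agree[of j] agree[of "j + 1"] that tm_Suc_even[of "p + j"] tm_Suc_even[of "p + d + j"]
      by auto
  qed
  have "odd p \<or> odd (p + d)" using assms by auto
  then show False
  proof
    assume "odd p"
    with alt[of 0] alt[of 1] alt[of 2] show False
      using tm_not_alternating_from_odd[of p] by simp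
  next
    assume "odd (p + d)"
    with alt[of 0] alt[of 1] alt[of 2] show False
      using tm_not_alternating_from_odd[of "p + d"] by simp
  qed
qed

lemma tm_shift_disagrees:
  assumes "odd c"
  shows "\<exists>j \<le> 3 * 2 ^ e. tm (p + j) \<noteq> tm (p + j + 2 ^ e * c)"
  using assms
proof (induction e arbitrary: p)
  case 0
  then obtain j where "j < 4" "tm (p + j) \<noteq> tm (p + c + j)"
    using tm_odd_shift_disagrees_4 by blast
  then show ?case by (intro exI[of _ j]) (auto simp: add_ac)
next
  case (Suc e)
  then obtain j where j: "j \<le> 3 * 2 ^ e" "tm (p div 2 + j) \<noteq> tm (p div 2 + (j + 2 ^ e * c))"
    by (auto simp: add.assoc)
  have "tm (p + 2 * j) \<noteq> tm (p + 2 * (j + 2 ^ e * c))"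
    using tm_halve j(2) by blast
  with j(1) show ?case
    by (intro exI[of _ "2 * j"]) (auto simp: algebra_simps)
qed

lemma tm_factor_block:
  "tm_factor (n * m + 1) ((n + 1) * m) = map (\<lambda>j. of_bool (tm (n * m + j))) [0..<m]"
proof -
  have "[n * m + 1..<(n + 1) * m + 1] = map (\<lambda>j. j + (n * m + 1)) [0..<m]"
    by (subst map_add_upt) (simp add: algebra_simps)
  then show ?thesis
    by (simp add: tm_factor_def thue_morse_def tm_def odd_iff_mod_2_eq_one add_ac)
qed

lemma tm_blocks_eq_imp_le:
  assumes "odd m" and "odd c" and "a < b" and "b - a = 2 ^ e * c"
    and "tm_factor (a * m + 1) ((a + 1) * m) = tm_factor (b * m + 1) ((b + 1) * m)"
  shows "m \<le> 3 * 2 ^ e"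
proof (rule ccontr)
  assume "\<not> m \<le> 3 * 2 ^ e"
  have "tm (a * m + j) = tm (b * m + j)" if "j < m" for j
    using assms(5) that unfolding tm_factor_block by (simp add: map_eq_conv of_bool_eq_iff)
  moreover have "b * m = a * m + 2 ^ e * (c * m)"
    using assms(3,4) by (metis add_mult_distrib le_add_diff_inverse less_imp_le mult.assoc)
  ultimately have "tm (a * m + j) = tm (a * m + j + 2 ^ e * (c * m))" if "j < m" for j
    using that by (simp add: add_ac)
  moreover obtain j where "j \<le> 3 * 2 ^ e" "tm (a * m + j) \<noteq> tm (a * m + j + 2 ^ e * (c * m))"
    using tm_shift_disagrees[of "c * m" e "a * m"] assms(1,2) by auto
  ultimately show False using \<open>\<not> m \<le> 3 * 2 ^ e\<close> by auto
qed

lemma tm_delta_le: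
  assumes "0 < m" and "m \<le> 3 * 2 ^ e"
  shows "tm_delta m \<le> int e"
proof -
  have "real m / 3 \<le> 2 ^ e"
  proof -
    have "real m \<le> real (3 * 2 ^ e)"
      using assms(2) by (rule of_nat_mono)
    then show ?thesis by simp
  qed
  then have "log 2 (real m / 3) \<le> log 2 (2 ^ e)"
    using assms(1) by (subst log_le_cancel_iff) auto
  then have "log 2 (real m / 3) \<le> real e"
    by (simp add: log_nat_power)
  then show ?thesis
    unfolding tm_delta_def by (simp add: ceiling_le_iff)
qed

theorem corollary1:
  fixes k m :: nat
  assumes "k \<ge> 3" and "odd m" and "0 < m" and "m \<notin> F_set k"
  shows "real k - 1 \<ge> 2 powr (real_of_int (tm_delta m))"
proof -
  obtain n1 n2 where n: "n1 < k" "n2 < k" "n1 \<noteq> n2"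
    and eq: "tm_factor (n1 * m + 1) ((n1 + 1) * m) = tm_factor (n2 * m + 1) ((n2 + 1) * m)"
    using assms(2-4) unfolding F_set_def by blast
  obtain a b where ab: "a < b" "b < k"
    and eq_ab: "tm_factor (a * m + 1) ((a + 1) * m) = tm_factor (b * m + 1) ((b + 1) * m)"
    using n eq that by (metis linorder_neqE_nat)
  define e where "e = multiplicity 2 (b - a)"
  obtain c where c: "b - a = 2 ^ e * c" "odd c"
    using multiplicity_decompose'[of "b - a" 2] ab(1) unfolding e_def by auto
  have "tm_delta m \<le> int e"
    using assms(3) tm_blocks_eq_imp_le[OF assms(2) c(2) ab(1) c(1) eq_ab] by (rule tm_delta_le)
  then have "2 powr real_of_int (tm_delta m) \<le> 2 powr real e"
    by simp
  also have "\<dots> = 2 ^ e"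
    by (simp add: powr_realpow)
  also have "\<dots> \<le> real k - 1"
  proof -
    have "2 ^ e \<le> b - a"
      using c by (cases c) auto
    then have "2 ^ e + 1 \<le> k"
      using ab by linarith
    then have "real (2 ^ e + 1) \<le> real k"
      by (rule of_nat_mono)
    then show ?thesis
      by simp
  qed
  finally show ?thesis .
qed

end
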